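(* Let $\mathscr F$ be a complete set of functions $\mathscr X\to\mathbb R$ and $\mathscr H=\mathscr F^l$. Then for every distribution over $\mathscr X\times\mathscr Y$ and every $h\in\mathscr H$, $$\mathscr R_{\mathsf L_{\rm ham}}(h)-\mathscr R^*_{\mathsf L_{\rm ham}}(\mathscr H)+\mathscr M_{\mathsf L_{\rm ham}}(\mathscr H)\le 2\big(\mathscr R_{\widetilde{\mathsf L}_{\log}}(h)-\mathscr R^*_{\widetilde{\mathsf L}_{\log}}(\mathscr H)+\mathscr M_{\widetilde{\mathsf L}_{\log}}(\mathscr H)\big)^{1/2},$$ where $\widetilde{\mathsf L}_{\log}$ is the multi-label logistic loss built from the (normalized) Hamming loss.
   Context: Let $\mathscr X$ be an input space, $l\ge1$, $[l]=\{1,\dots,l\}$, $\mathscr Y=\{+1,-1\}^l$. $\mathscr F$ complete means $\{f(x):f\in\mathscr F\}=\mathbb R$ for all $x$. Hypotheses are $h\colon\mathscr X\times[l]\to\mathbb R$; $\mathscr F^l$ is the set of $h$ with $h(\cdot,i)\in\mathscr F$ for all $i$. Let $\operatorname{sign}(t)=1$ if $t\ge0$, $-1$ otherwise, and $\mathsf h(x)=(\operatorname{sign}h(x,1),\dots,\operatorname{sign}h(x,l))\in\mathscr Y$. The Hamming loss (normalized to $[0,1]$) is $\overline{\mathsf L}_{\rm ham}(y',y)=\frac1l\sum_{i=1}^l1_{y_i\ne y'_i}$ and $\mathsf L_{\rm ham}(h,x,y)=\overline{\mathsf L}_{\rm ham}(\mathsf h(x),y)$. The multi-label logistic loss is $\widetilde{\mathsf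 L}_{\log}(h,x,y)=\sum_{y'\in\mathscr Y}(1-\overline{\mathsf L}_{\rm ham}(y',y))\log\big(\sum_{y''\in\mathscr Y}e^{\sum_{i=1}^l(y''_i-y'_i)h(x,i)}\big)$. For a loss $\ell$, class $\mathscr H$ and distribution $\mathcal D$: $\mathscr R_\ell(h)=\mathbb E_{\mathcal D}[\ell(h,x,y)]$, $\mathscr R^*_\ell(\mathscr H)=\inf_{h\in\mathscr H}\mathscr R_\ell(h)$, $\mathscr M_\ell(\mathscr H)=\mathscr R^*_\ell(\mathscr H)-\mathbb E_x[\inf_{h\in\mathscr H}\mathbb E_{y\mid x}[\ell(h,x,y)]]$. *)

theory Defs
  imports "HOL-Probability.Probability"
begin

text \<open>Label space Y = {+1,-1}^l, labels as functions on [l] = {1..l} (undefined outside).\<close>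
definition labels :: "nat \<Rightarrow> (nat \<Rightarrow> real) set" where
  "labels l = PiE {1..l} (\<lambda>_. {1, -1})"

definition sgn01 :: "real \<Rightarrow> real" where
  "sgn01 t = (if t \<ge> 0 then 1 else -1)"

definition hyp_class :: "nat \<Rightarrow> ('x \<Rightarrow> real) set \<Rightarrow> ('x \<Rightarrow> nat \<Rightarrow> real) set" where
  "hyp_class l F = {h. \<forall>i\<in>{1..l}. (\<lambda>x. h x i) \<in> F}"

definition complete_fam :: "'x set \<Rightarrow> ('x \<Rightarrow> real) set \<Rightarrow> bool" where
  "complete_fam X F \<longleftrightarrow> (\<forall>x\<in>X. (\<lambda>f. f x) ` F = UNIV)"

definition pred_label :: "nat \<Rightarrow> ('x \<Rightarrow> nat \<Rightarrow> real) \<Rightarrow> 'x \<Rightarrow> (nat \<Rightarrow> real)" where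
  "pred_label l h x = (\<lambda>i\<in>{1..l}. sgn01 (h x i))"

definition ham_bar :: "nat \<Rightarrow> (nat \<Rightarrow> real) \<Rightarrow> (nat \<Rightarrow> real) \<Rightarrow> real" where
  "ham_bar l y' y = (1 / real l) * real (card {i\<in>{1..l}. y i \<noteq> y' i})"

definition ham_loss :: "nat \<Rightarrow> ('x \<Rightarrow> nat \<Rightarrow> real) \<Rightarrow> 'x \<Rightarrow> (nat \<Rightarrow> real) \<Rightarrow> real" where
  "ham_loss l h x y = ham_bar l (pred_label l h x) y"

definition log_loss :: "nat \<Rightarrow> ('x \<Rightarrow> nat \<Rightarrow> real) \<Rightarrow> 'x \<Rightarrow> (nat \<Rightarrow> real) \<Rightarrow> real" where
  "log_loss l h x y =
     (\<Sum>y'\<in>labels l. (1 - ham_bar l y' y) *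
        ln (\<Sum>y''\<in>labels l. exp (\<Sum>i=1..l. (y'' i - y' i) * h x i)))"

text \<open>A distribution on X \<times> Y is given by its X-marginal M and the conditional
  probabilities p x y = P(y | x).  Losses are nonnegative; risks are
  (extended) nonnegative integrals, viewed in ereal.\<close>
definition risk :: "'x measure \<Rightarrow> ('x \<Rightarrow> (nat \<Rightarrow> real) \<Rightarrow> real) \<Rightarrow> (nat \<Rightarrow> real) set
    \<Rightarrow> (('x \<Rightarrow> nat \<Rightarrow> real) \<Rightarrow> 'x \<Rightarrow> (nat \<Rightarrow> real) \<Rightarrow> real) \<Rightarrow> ('x \<Rightarrow> nat \<Rightarrow> real) \<Rightarrow> ereal" where
  "risk M p Y L h = enn2ereal (\<integral>\<^sup>+ x. ennreal (\<Sum>y\<in>Y. p x y * L h x y) \<partial>M)"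

definition best_risk :: "'x measure \<Rightarrow> ('x \<Rightarrow> (nat \<Rightarrow> real) \<Rightarrow> real) \<Rightarrow> (nat \<Rightarrow> real) set
    \<Rightarrow> (('x \<Rightarrow> nat \<Rightarrow> real) \<Rightarrow> 'x \<Rightarrow> (nat \<Rightarrow> real) \<Rightarrow> real) \<Rightarrow> ('x \<Rightarrow> nat \<Rightarrow> real) set \<Rightarrow> ereal" where
  "best_risk M p Y L H = (INF h\<in>H. risk M p Y L h)"

definition min_gap :: "'x measure \<Rightarrow> ('x \<Rightarrow> (nat \<Rightarrow> real) \<Rightarrow> real) \<Rightarrow> (nat \<Rightarrow> real) set
    \<Rightarrow> (('x \<Rightarrow> nat \<Rightarrow> real) \<Rightarrow> 'x \<Rightarrow> (nat \<Rightarrow> real) \<Rightarrow> real) \<Rightarrow> ('x \<Rightarrow> nat \<Rightarrow> real) set \<Rightarrow> ereal" where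
  "min_gap M p Y L H = best_risk M p Y L H -
     enn2ereal (\<integral>\<^sup>+ x. (INF h\<in>H. ennreal (\<Sum>y\<in>Y. p x y * L h x y)) \<partial>M)"

definition esqrt :: "ereal \<Rightarrow> ereal" where
  "esqrt z = (if z = \<infinity> then \<infinity> else ereal (sqrt (real_of_ereal z)))"

end

theory Submission
  imports Defs
begin

text \<open>
  Fix x and let \<open>m\<^sub>i = E[y\<^sub>i | x]\<close>. On the label cube \<open>{-1,1}\<^sup>l\<close> the coordinates are
  orthogonal, so both conditional risks depend on the label distribution only through m: the
  Hamming one is \<open>\<Sum>\<^sub>i (1 - sgn(h\<^sub>i) m\<^sub>i) / (2l)\<close>, minimised by predicting the sign of each
  \<open>m\<^sub>i\<close>, and the logistic one is \<open>2\<^sup>l\<^sup>-\<^sup>1 \<Sum>\<^sub>i (ln (2 cosh h\<^sub>i) - m\<^sub>i h\<^sub>i / l)\<close>.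
  A coordinate with the wrong sign costs \<open>|m\<^sub>i| / l\<close> in Hamming regret, while moving \<open>h\<^sub>i\<close>
  to \<open>m\<^sub>i / l\<close> lowers the logistic risk by at least \<open>2\<^sup>l\<^sup>-\<^sup>1 (m\<^sub>i / l)\<^sup>2 / 2\<close>, because
  \<open>ln 2 \<le> ln (2 cosh u) \<le> ln 2 + u\<^sup>2 / 2\<close>. By AM-GM this gives, pointwise in x and for every
  \<open>t > 0\<close>, Hamming regret \<open>\<le>\<close> logistic regret \<open>/ t + t\<close>. This bound is linear in the regrets, so it
  survives integration over x, and optimising t afterwards yields the square root. Adding the
  minimizability gap turns the excess risk over the best-in-class risk into the excess over the
  expected pointwise infimum, which is what the pointwise argument controls.
\<close>

section \<open>Sums over the label cube\<close>

lemma card_labels: "card (labels l) = 2 ^ l"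
  unfolding labels_def by (simp add: card_PiE numeral_2_eq_2)

lemma labels_coord: "y \<in> labels l \<Longrightarrow> i \<in> {1..l} \<Longrightarrow> y i = 1 \<or> y i = -1"
  unfolding labels_def by (auto simp: PiE_iff)

lemma sum_labels_flip:
  assumes "i \<in> {1..l}"
  shows "(\<Sum>y\<in>labels l. f y) = (\<Sum>y\<in>labels l. f (y(i := - y i)))"
proof -
  have flip: "y(i := - y i) \<in> labels l" if "y \<in> labels l" for y
    using that assms unfolding labels_def by (auto simp: PiE_iff extensional_def)
  show ?thesis
    by (rule sum.reindex_bij_witness[of _ "\<lambda>y. y(i := - y i)" "\<lambda>y. y(i := - y i)"]) (auto simp: flip)
qed

lemma sum_labels_coord:
  assumes "i \<in> {1..l}"
  shows "(\<Sum>y\<in>labels l. y i) = 0"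
  using sum_labels_flip[OF assms, of "\<lambda>y. y i"] by (simp add: sum_negf)

lemma sum_labels_coord_mult:
  assumes "i \<in> {1..l}" "j \<in> {1..l}"
  shows "(\<Sum>y\<in>labels l. y i * y j) = (if i = j then 2 ^ l else 0)"
proof (cases "i = j")
  case True
  have "y i * y i = 1" if "y \<in> labels l" for y
    using labels_coord[OF that assms(1)] by auto
  then have "(\<Sum>y\<in>labels l. y i * y i) = (\<Sum>y\<in>labels l. 1)"
    by (intro sum.cong) auto
  then show ?thesis using True by (simp add: card_labels)
next
  case False
  then show ?thesis
    using sum_labels_flip[OF assms(1), of "\<lambda>y. y i * y j"] by (simp add: sum_negf)
qed

lemma sum_labels_inner:
  "(\<Sum>y\<in>labels l. \<Sum>i=1..l. y i * c i) = 0"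
  by (subst sum.swap) (simp add: sum_distrib_right[symmetric] sum_labels_coord)

lemma sum_labels_inner_mult:
  "(\<Sum>y\<in>labels l. (\<Sum>j=1..l. y j * a j) * (\<Sum>i=1..l. y i * c i))
     = 2 ^ l * (\<Sum>i=1..l. a i * c i)"
proof -
  have "(\<Sum>y\<in>labels l. (\<Sum>j=1..l. y j * a j) * (\<Sum>i=1..l. y i * c i))
      = (\<Sum>y\<in>labels l. \<Sum>j=1..l. \<Sum>i=1..l. a j * c i * (y j * y i))"
    by (intro sum.cong refl) (simp add: sum_product algebra_simps)
  also have "\<dots> = (\<Sum>j=1..l. \<Sum>i=1..l. a j * c i * (\<Sum>y\<in>labels l. y j * y i))"
    by (subst sum.swap) (simp add: sum.swap[of _ "labels l"] sum_distrib_left)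
  also have "\<dots> = (\<Sum>j=1..l. 2 ^ l * (a j * c j))"
    by (intro sum.cong refl) (simp add: sum_labels_coord_mult if_distrib cong: if_cong)
  finally show ?thesis by (simp add: sum_distrib_left)
qed

lemma card_disagree_labels:
  assumes "y \<in> labels l" "z \<in> labels l"
  shows "real (card {i\<in>{1..l}. y i \<noteq> z i}) = (\<Sum>i=1..l. (1 - y i * z i) / 2)"
proof -
  have "real (card {i\<in>{1..l}. y i \<noteq> z i}) = (\<Sum>i=1..l. if y i \<noteq> z i then 1 else 0)"
    by (simp add: sum.If_cases Int_def conj_commute)
  also have "\<dots> = (\<Sum>i=1..l. (1 - y i * z i) / 2)"
    using labels_coord[OF assms(1)] labels_coord[OF assms(2)] by (intro sum.cong) fastforce+
  finally show ?thesis .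
qed

lemma sum_labels_exp_inner:
  "(\<Sum>y\<in>labels l. exp (\<Sum>i=1..l. y i * g i)) = (\<Prod>i=1..l. exp (g i) + exp (- g i))"
proof -
  have "(\<Prod>i=1..l. exp (g i) + exp (- g i)) = (\<Prod>i=1..l. \<Sum>s\<in>{1, -1::real}. exp (s * g i))"
    by simp
  also have "\<dots> = (\<Sum>y\<in>labels l. \<Prod>i=1..l. exp (y i * g i))"
    unfolding labels_def by (rule prod_sum_PiE) auto
  finally show ?thesis by (simp add: exp_sum)
qed

section \<open>Closed forms of the conditional risks\<close>

definition label_mean :: "nat \<Rightarrow> ((nat \<Rightarrow> real) \<Rightarrow> real) \<Rightarrow> nat \<Rightarrow> real" where
  "label_mean l q i = (\<Sum>y\<in>labels l. q y * y i)"

definition ln_two_cosh :: "real \<Rightarrow> real" where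
  "ln_two_cosh u = ln (exp u + exp (- u))"

definition cond_risk :: "('x \<Rightarrow> 'y \<Rightarrow> real) \<Rightarrow> 'y set \<Rightarrow> ('h \<Rightarrow> 'x \<Rightarrow> 'y \<Rightarrow> real) \<Rightarrow> 'h \<Rightarrow> 'x \<Rightarrow> real"
  where "cond_risk p Y L h x = (\<Sum>y\<in>Y. p x y * L h x y)"

definition ham_cond_risk :: "nat \<Rightarrow> (nat \<Rightarrow> real) \<Rightarrow> (nat \<Rightarrow> real) \<Rightarrow> real" where
  "ham_cond_risk l m g = (\<Sum>i=1..l. (1 - sgn01 (g i) * m i) / (2 * real l))"

definition ham_min_cond_risk :: "nat \<Rightarrow> (nat \<Rightarrow> real) \<Rightarrow> real" where
  "ham_min_cond_risk l m = (\<Sum>i=1..l. (1 - \<bar>m i\<bar>) / (2 * real l))"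

definition coord_log_risk :: "real \<Rightarrow> real \<Rightarrow> real \<Rightarrow> real" where
  "coord_log_risk L m u = ln_two_cosh u - m * u / L"

definition log_cond_risk :: "nat \<Rightarrow> (nat \<Rightarrow> real) \<Rightarrow> (nat \<Rightarrow> real) \<Rightarrow> real" where
  "log_cond_risk l m g = 2 ^ (l - 1) * (\<Sum>i=1..l. coord_log_risk (real l) (m i) (g i))"

lemma sgn01_cases: "sgn01 t = 1 \<or> sgn01 t = -1"
  unfolding sgn01_def by auto

lemma pred_label_mem: "pred_label l g x \<in> labels l"
  unfolding pred_label_def labels_def using sgn01_cases by auto

lemma ham_loss_eq:
  assumes "y \<in> labels l"
  shows "ham_loss l g x y = (\<Sum>i=1..l. (1 - y i * sgn01 (g x i)) / (2 * real l))"
proof -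
  have "ham_loss l g x y = (\<Sum>i=1..l. (1 - y i * pred_label l g x i) / 2) / real l"
    unfolding ham_loss_def ham_bar_def card_disagree_labels[OF assms pred_label_mem] by simp
  also have "\<dots> = (\<Sum>i=1..l. (1 - y i * sgn01 (g x i)) / (2 * real l))"
    by (simp add: sum_divide_distrib pred_label_def)
  finally show ?thesis .
qed

lemma cond_risk_ham_loss:
  assumes "(\<Sum>y\<in>labels l. p x y) = 1"
  shows "cond_risk p (labels l) (ham_loss l) g x = ham_cond_risk l (label_mean l (p x)) (g x)"
proof -
  have "cond_risk p (labels l) (ham_loss l) g x
      = (\<Sum>i=1..l. ((\<Sum>y\<in>labels l. p x y) - sgn01 (g x i) * label_mean l (p x) i) / (2 * real l))"
    unfolding cond_risk_def label_mean_def
    by (simp add: ham_loss_eq sum_distrib_left sum_divide_distrib[symmetric] sum_subtractf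
        algebra_simps sum.swap[of _ "labels l"] cong: sum.cong)
  then show ?thesis
    unfolding ham_cond_risk_def assms by simp
qed

lemma ln_sum_labels_exp:
  "ln (\<Sum>y\<in>labels l. exp (\<Sum>i=1..l. (y i - z i) * g i))
     = (\<Sum>i=1..l. ln_two_cosh (g i)) - (\<Sum>i=1..l. z i * g i)"
proof -
  define P where "P = (\<Prod>i=1..l. exp (g i) + exp (- g i))"
  have pos: "exp (g i) + exp (- g i) > 0" for i
    by (simp add: add_pos_pos)
  then have "P > 0"
    unfolding P_def by (intro prod_pos) auto
  have "(\<Sum>y\<in>labels l. exp (\<Sum>i=1..l. (y i - z i) * g i))
      = (\<Sum>y\<in>labels l. exp (\<Sum>i=1..l. y i * g i)) * exp (- (\<Sum>i=1..l. z i * g i))"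
    by (simp add: sum_distrib_right left_diff_distrib sum_subtractf exp_diff divide_inverse exp_minus)
  also have "\<dots> = P * exp (- (\<Sum>i=1..l. z i * g i))"
    unfolding sum_labels_exp_inner P_def ..
  finally have "ln (\<Sum>y\<in>labels l. exp (\<Sum>i=1..l. (y i - z i) * g i))
      = ln P - (\<Sum>i=1..l. z i * g i)"
    using \<open>P > 0\<close> by (simp add: ln_mult)
  also have "ln P = (\<Sum>i=1..l. ln_two_cosh (g i))"
    unfolding P_def ln_two_cosh_def by (intro ln_prod) (auto simp: pos[THEN less_imp_neq, THEN not_sym])
  finally show ?thesis .
qed

lemma one_minus_ham_bar:
  assumes "l \<ge> 1" "y \<in> labels l" "z \<in> labels l"
  shows "1 - ham_bar l z y = 1 / 2 + (\<Sum>j=1..l. z j * y j) / (2 * real l)"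
  using assms(1) unfolding ham_bar_def card_disagree_labels[OF assms(2,3)]
  by (simp add: sum_subtractf sum_divide_distrib[symmetric] field_simps)

lemma log_loss_eq:
  assumes "l \<ge> 1" "y \<in> labels l"
  shows "log_loss l g x y = 2 ^ (l - 1) * (\<Sum>i=1..l. ln_two_cosh (g x i) - y i * g x i / real l)"
proof -
  define S where "S = (\<Sum>i=1..l. ln_two_cosh (g x i))"
  define G where "G = (\<lambda>z. \<Sum>i=1..l. z i * g x i)"
  define T where "T = (\<lambda>z. \<Sum>j=1..l. z j * y j)"
  have "log_loss l g x y = (\<Sum>z\<in>labels l. (1 / 2 + T z / (2 * real l)) * (S - G z))"
    unfolding log_loss_def S_def G_def T_def
    by (intro sum.cong refl) (simp only: one_minus_ham_bar[OF assms] ln_sum_labels_exp)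
  also have "\<dots> = 2 ^ l * S / 2 - (\<Sum>z\<in>labels l. G z) / 2
      + S / (2 * real l) * (\<Sum>z\<in>labels l. T z) - (\<Sum>z\<in>labels l. T z * G z) / (2 * real l)"
    by (simp add: algebra_simps add_divide_distrib diff_divide_distrib sum.distrib sum_subtractf
        sum_distrib_left sum_divide_distrib card_labels)
  also have "\<dots> = 2 ^ l * (S - G y / real l) / 2"
    unfolding G_def T_def sum_labels_inner sum_labels_inner_mult
    using assms(1) by (simp add: field_simps)
  also have "\<dots> = 2 ^ (l - 1) * (\<Sum>i=1..l. ln_two_cosh (g x i) - y i * g x i / real l)"
    using assms(1) by (simp add: S_def G_def sum_subtractf sum_divide_distrib power_minus_mult[symmetric])
  finally show ?thesis .
qed

lemma cond_risk_log_loss: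
  assumes "l \<ge> 1" "(\<Sum>y\<in>labels l. p x y) = 1"
  shows "cond_risk p (labels l) (log_loss l) g x = log_cond_risk l (label_mean l (p x)) (g x)"
proof -
  have "cond_risk p (labels l) (log_loss l) g x
      = 2 ^ (l - 1) * (\<Sum>i=1..l. (\<Sum>y\<in>labels l. p x y) * ln_two_cosh (g x i)
                                  - label_mean l (p x) i * g x i / real l)"
    unfolding cond_risk_def label_mean_def
    by (simp add: log_loss_eq[OF assms(1)] sum_distrib_left sum_distrib_right sum_divide_distrib
        sum_subtractf algebra_simps sum.swap[of _ "labels l"] cong: sum.cong)
  then show ?thesis
    unfolding log_cond_risk_def coord_log_risk_def assms(2) by simp
qed

lemma abs_label_mean_le:
  assumes "\<forall>y\<in>labels l. q y \<ge> 0" "(\<Sum>y\<in>labels l. q y) = 1" "i \<in> {1..l}"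
  shows "\<bar>label_mean l q i\<bar> \<le> 1"
proof -
  have "\<bar>label_mean l q i\<bar> \<le> (\<Sum>y\<in>labels l. \<bar>q y * y i\<bar>)"
    unfolding label_mean_def by (rule sum_abs)
  also have "\<dots> = (\<Sum>y\<in>labels l. q y)"
    using assms(1) labels_coord[OF _ assms(3)] by (intro sum.cong refl) (force simp: abs_mult)
  finally show ?thesis
    using assms(2) by simp
qed

lemma ham_min_cond_risk_nonneg:
  assumes "\<forall>i\<in>{1..l}. \<bar>m i\<bar> \<le> 1"
  shows "0 \<le> ham_min_cond_risk l m"
  unfolding ham_min_cond_risk_def using assms by (intro sum_nonneg) auto

lemma ham_min_cond_risk_le: "ham_min_cond_risk l m \<le> ham_cond_risk l m g"
  unfolding ham_min_cond_risk_def ham_cond_risk_def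
proof (intro sum_mono divide_right_mono)
  fix i
  show "1 - \<bar>m i\<bar> \<le> 1 - sgn01 (g i) * m i"
    using sgn01_cases[of "g i"] by auto
qed simp

lemma ham_cond_risk_le_one:
  assumes "\<forall>i\<in>{1..l}. \<bar>m i\<bar> \<le> 1"
  shows "ham_cond_risk l m g \<le> 1"
proof -
  have "ham_cond_risk l m g \<le> (\<Sum>i=1..l. 2 / (2 * real l))"
    unfolding ham_cond_risk_def
  proof (intro sum_mono divide_right_mono)
    fix i assume "i \<in> {1..l}"
    then show "1 - sgn01 (g i) * m i \<le> 2"
      using assms sgn01_cases[of "g i"] by force
  qed simp
  also have "\<dots> \<le> 1"
    by simp
  finally show ?thesis .
qed

section \<open>Calibration of the logistic loss with respect to the Hamming loss\<close>

lemma ln_two_cosh_eq: "ln_two_cosh u = ln 2 + ln (cosh u)"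
proof -
  have "exp u + exp (- u) > 0"
    by (simp add: add_pos_pos)
  then show ?thesis
    by (simp add: ln_two_cosh_def cosh_field_def ln_div)
qed

lemma ln_two_le_ln_two_cosh: "ln 2 \<le> ln_two_cosh u"
  using cosh_real_ge_1[of u] by (simp add: ln_two_cosh_eq)

lemma abs_le_ln_two_cosh: "\<bar>u\<bar> \<le> ln_two_cosh u"
proof -
  have "exp \<bar>u\<bar> \<le> exp u + exp (- u)"
    by (cases "u \<ge> 0") auto
  then show ?thesis
    unfolding ln_two_cosh_def by (subst ln_ge_iff) (auto simp: add_pos_pos)
qed

lemma ln_two_cosh_le: "ln_two_cosh u \<le> ln 2 + u\<^sup>2 / 2"
proof -
  \<comment> \<open>Hoeffding's lemma for the fair coin with values \<open>\<plusminus>a\<close> says \<open>ln (cosh a) \<le> a\<^sup>2 / 2\<close>.\<close>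
  define a where "a = \<bar>u\<bar>"
  have "1 + 1 / 2 * (exp (2 * a) - 1) = exp a * cosh a"
    by (simp add: cosh_field_def field_simps exp_add[symmetric] mult_2)
  then have "- (2 * a) * (1 / 2) + ln (1 + 1 / 2 * (exp (2 * a) - 1)) = ln (cosh a)"
    by (simp add: ln_mult)
  moreover have "- (2 * a) * (1 / 2) + ln (1 + 1 / 2 * (exp (2 * a) - 1)) \<le> (2 * a)\<^sup>2 / 8"
    using Hoeffdings_lemma_aux[of "2 * a" "1 / 2"] by (simp add: a_def)
  ultimately show ?thesis
    by (simp add: ln_two_cosh_eq a_def power2_eq_square)
qed

lemma ln_two_cosh_excess:
  assumes "b * u \<le> 0"
  shows "b\<^sup>2 / 2 \<le> (ln_two_cosh u - b * u) - (ln_two_cosh b - b * b)"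
  using ln_two_le_ln_two_cosh[of u] ln_two_cosh_le[of b] assms by (simp add: power2_eq_square)

lemma le_sq_div_add:
  fixes K t x :: real
  assumes "K > 0" "t > 0"
  shows "x \<le> K * x\<^sup>2 / (2 * t) + t / (2 * K)"
proof -
  have "0 \<le> (K * x - t)\<^sup>2"
    by simp
  then have "2 * K * t * x \<le> K\<^sup>2 * x\<^sup>2 + t\<^sup>2"
    by (simp add: power2_eq_square algebra_simps)
  then show ?thesis
    using assms by (simp add: field_simps power2_eq_square)
qed

lemma coord_calibration:
  fixes K L t m u :: real
  assumes K: "K > 0" and L: "L > 0" and t: "t > 0"
  defines "w \<equiv> if sgn01 u * m < 0 then m / L else u"
  shows "coord_log_risk L m w \<le> coord_log_risk L m u"
    and "(\<bar>m\<bar> - sgn01 u * m) / (2 * L)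
           \<le> K * (coord_log_risk L m u - coord_log_risk L m w) / t + t / (2 * K)"
proof -
  let ?E = "(\<bar>m\<bar> - sgn01 u * m) / (2 * L)"
  let ?D = "coord_log_risk L m u - coord_log_risk L m w"
  have "0 \<le> ?D \<and> ?E \<le> K * ?D / t + t / (2 * K)"
  proof (cases "sgn01 u * m < 0")
    case True
    define b where "b = m / L"
    have "m * u \<le> 0"
      using True by (cases "u \<ge> 0") (auto simp: sgn01_def mult_nonpos_nonneg mult_nonneg_nonpos)
    then have "b * u \<le> 0"
      using L by (simp add: b_def divide_nonpos_pos)
    from ln_two_cosh_excess[OF this]
    have excess: "b\<^sup>2 / 2 \<le> ?D"
      using True by (simp add: w_def b_def coord_log_risk_def)
    have "?E = \<bar>b\<bar>"
      using True L by (cases "u \<ge> 0") (auto simp: sgn01_def b_def abs_div_pos)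
    also have "\<dots> \<le> K * \<bar>b\<bar>\<^sup>2 / (2 * t) + t / (2 * K)"
      by (rule le_sq_div_add[OF K t])
    also have "K * \<bar>b\<bar>\<^sup>2 / (2 * t) = K * (b\<^sup>2 / 2) / t"
      by simp
    also have "\<dots> \<le> K * ?D / t"
      using excess K t by (intro divide_right_mono mult_left_mono) auto
    finally show ?thesis
      using excess zero_le_power2[of b] by linarith
  next
    case False
    then have "w = u" and "\<bar>m\<bar> = sgn01 u * m"
      using sgn01_cases[of u] by (auto simp: w_def)
    then show ?thesis
      using K t by simp
  qed
  then show "coord_log_risk L m w \<le> coord_log_risk L m u" and "?E \<le> K * ?D / t + t / (2 * K)"
    by auto
qed

definition sign_corrected :: "nat \<Rightarrow> (nat \<Rightarrow> real) \<Rightarrow> (nat \<Rightarrow> real) \<Rightarrow> nat \<Rightarrow> real" where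
  "sign_corrected l m g i = (if sgn01 (g i) * m i < 0 then m i / real l else g i)"

lemma log_cond_risk_sign_corrected_le:
  assumes "l \<ge> 1"
  shows "log_cond_risk l m (sign_corrected l m g) \<le> log_cond_risk l m g"
  unfolding log_cond_risk_def sign_corrected_def
  using assms by (intro mult_left_mono sum_mono coord_calibration(1)[of 1 _ 1]) auto

lemma ham_log_calibration:
  assumes "l \<ge> 1" "t > 0"
  shows "ham_cond_risk l m g - ham_min_cond_risk l m
           \<le> (log_cond_risk l m g - log_cond_risk l m (sign_corrected l m g)) / t + t"
proof -
  define K :: real where "K = 2 ^ (l - 1)"
  have K: "K > 0" and L: "real l > 0"
    using assms(1) by (simp_all add: K_def)
  have "ham_cond_risk l m g - ham_min_cond_risk l m
      = (\<Sum>i=1..l. (\<bar>m i\<bar> - sgn01 (g i) * m i) / (2 * real l))"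
    unfolding ham_cond_risk_def ham_min_cond_risk_def
    by (simp add: sum_subtractf[symmetric] diff_divide_distrib[symmetric])
  also have "\<dots> \<le> (\<Sum>i=1..l. K * (coord_log_risk l (m i) (g i)
                      - coord_log_risk l (m i) (sign_corrected l m g i)) / t + t / (2 * K))"
    unfolding sign_corrected_def by (intro sum_mono coord_calibration(2)[OF K L assms(2)])
  also have "\<dots> = (log_cond_risk l m g - log_cond_risk l m (sign_corrected l m g)) / t
                   + real l * t / (2 * K)"
    unfolding log_cond_risk_def K_def
    by (simp add: sum.distrib sum_subtractf sum_divide_distrib[symmetric] sum_distrib_left
        right_diff_distrib)
  also have "real l * t / (2 * K) \<le> t"
  proof -
    have "2 * K = 2 ^ l"
      using assms(1) by (simp add: K_def power_minus_mult[symmetric] mult.commute)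
    moreover have "real l \<le> 2 ^ l"
      using less_exp[of l] by (metis less_imp_le of_nat_le_iff of_nat_numeral of_nat_power)
    ultimately have "real l * t \<le> 2 * K * t"
      using assms(2) by (intro mult_right_mono) auto
    then show ?thesis
      using K by (simp add: pos_divide_le_eq mult.commute)
  qed
  finally show ?thesis
    by simp
qed

lemma log_cond_risk_nonneg:
  assumes "l \<ge> 1" "\<forall>i\<in>{1..l}. \<bar>m i\<bar> \<le> 1"
  shows "0 \<le> log_cond_risk l m g"
  unfolding log_cond_risk_def
proof (intro mult_nonneg_nonneg sum_nonneg)
  fix i assume i: "i \<in> {1..l}"
  have "m i * g i / real l \<le> \<bar>m i * g i\<bar> / real l"
    by (intro divide_right_mono) auto
  also have "\<dots> \<le> \<bar>m i * g i\<bar>"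
    using assms(1) by (simp add: divide_le_eq mult_le_cancel_left1)
  also have "\<dots> \<le> \<bar>g i\<bar>"
    using assms(2) i by (simp add: abs_mult mult_left_le_one_le)
  also have "\<dots> \<le> ln_two_cosh (g i)"
    by (rule abs_le_ln_two_cosh)
  finally show "0 \<le> coord_log_risk (real l) (m i) (g i)"
    by (simp add: coord_log_risk_def)
qed simp

section \<open>From pointwise calibration to risks and minimizability gaps\<close>

lemma le_two_sqrt_if_le_div_add:
  fixes E D :: real
  assumes "D \<ge> 0" and le: "\<And>t. t > 0 \<Longrightarrow> E \<le> D / t + t"
  shows "E \<le> 2 * sqrt D"
proof (cases "D = 0")
  case True
  have "E \<le> 0"
  proof (rule field_le_epsilon)
    fix t :: real assume "t > 0"
    then show "E \<le> 0 + t"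
      using le[of t] True by simp
  qed
  then show ?thesis
    using True by simp
next
  case False
  then have "sqrt D > 0"
    using assms(1) by simp
  then have "E \<le> D / sqrt D + sqrt D"
    by (rule le)
  also have "D / sqrt D = sqrt D"
    using assms(1) by (rule real_div_sqrt)
  finally show ?thesis
    by simp
qed

lemma (in prob_space) integral_le_two_sqrt:
  fixes f g :: "'a \<Rightarrow> real"
  assumes f: "integrable M f" and g: "integrable M g" and "\<forall>x\<in>space M. 0 \<le> g x"
    and le: "\<forall>x\<in>space M. \<forall>t>0. f x \<le> g x / t + t"
  shows "(\<integral>x. f x \<partial>M) \<le> 2 * sqrt (\<integral>x. g x \<partial>M)"
proof (rule le_two_sqrt_if_le_div_add)
  show "0 \<le> (\<integral>x. g x \<partial>M)"
    using assms(3) by (intro integral_nonneg_AE AE_I2) auto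
  fix t :: real assume "t > 0"
  have g_t: "integrable M (\<lambda>x. g x / t)"
    using g by (rule integrable_divide)
  have "(\<integral>x. f x \<partial>M) \<le> (\<integral>x. g x / t + t \<partial>M)"
    using le \<open>t > 0\<close> by (intro integral_mono f Bochner_Integration.integrable_add g_t) auto
  also have "\<dots> = (\<integral>x. g x / t \<partial>M) + (\<integral>x. t \<partial>M)"
    by (intro Bochner_Integration.integral_add g_t integrable_const)
  also have "\<dots> = (\<integral>x. g x \<partial>M) / t + t"
    by (simp add: prob_space)
  finally show "(\<integral>x. f x \<partial>M) \<le> (\<integral>x. g x \<partial>M) / t + t" .
qed

lemma ereal_sqrt_le_esqrt:
  assumes "0 \<le> a" "ereal a \<le> z"
  shows "ereal (sqrt a) \<le> esqrt z"
  using assms by (cases z) (auto simp: esqrt_def)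

lemma ereal_diff_add_diff:
  fixes a b c :: ereal
  assumes "0 \<le> c" "c \<le> b" "b \<le> a" "a \<noteq> \<infinity>"
  shows "a - b + (b - c) = a - c"
  using assms by (cases a; cases b; cases c) simp_all

definition expected_min_cond_risk :: "'x measure \<Rightarrow> ('x \<Rightarrow> 'y \<Rightarrow> real) \<Rightarrow> 'y set
    \<Rightarrow> ('h \<Rightarrow> 'x \<Rightarrow> 'y \<Rightarrow> real) \<Rightarrow> 'h set \<Rightarrow> ereal" where
  "expected_min_cond_risk M p Y L H =
     enn2ereal (\<integral>\<^sup>+ x. (INF h\<in>H. ennreal (cond_risk p Y L h x)) \<partial>M)"

lemma risk_eq_nn_integral_cond_risk:
  "risk M p Y L h = enn2ereal (\<integral>\<^sup>+ x. ennreal (cond_risk p Y L h x) \<partial>M)"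
  by (simp add: risk_def cond_risk_def)

lemma min_gap_eq: "min_gap M p Y L H = best_risk M p Y L H - expected_min_cond_risk M p Y L H"
  by (simp add: min_gap_def expected_min_cond_risk_def cond_risk_def)

lemma enn2ereal_nn_integral_eq_integral:
  assumes "integrable M f" "\<forall>x\<in>space M. 0 \<le> f x"
  shows "enn2ereal (\<integral>\<^sup>+ x. ennreal (f x) \<partial>M) = ereal (\<integral>x. f x \<partial>M)"
proof -
  have "(\<integral>\<^sup>+ x. ennreal (f x) \<partial>M) = ennreal (\<integral>x. f x \<partial>M)"
    using assms by (intro nn_integral_eq_integral AE_I2) auto
  moreover have "0 \<le> (\<integral>x. f x \<partial>M)"
    using assms(2) by (intro integral_nonneg_AE AE_I2) auto
  ultimately show ?thesis
    by simp
qed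

lemma expected_min_cond_risk_le_best_risk:
  "expected_min_cond_risk M p Y L H \<le> best_risk M p Y L H"
  unfolding best_risk_def
proof (rule INF_greatest)
  fix h assume "h \<in> H"
  then have "(\<integral>\<^sup>+ x. (INF g\<in>H. ennreal (cond_risk p Y L g x)) \<partial>M)
      \<le> (\<integral>\<^sup>+ x. ennreal (cond_risk p Y L h x) \<partial>M)"
    by (intro nn_integral_mono INF_lower)
  then show "expected_min_cond_risk M p Y L H \<le> risk M p Y L h"
    unfolding expected_min_cond_risk_def risk_eq_nn_integral_cond_risk less_eq_ennreal.rep_eq .
qed

lemma excess_risk_add_min_gap:
  assumes "h \<in> H" "risk M p Y L h \<noteq> \<infinity>"
  shows "risk M p Y L h - best_risk M p Y L H + min_gap M p Y L H
           = risk M p Y L h - expected_min_cond_risk M p Y L H"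
  unfolding min_gap_eq
proof (rule ereal_diff_add_diff)
  show "0 \<le> expected_min_cond_risk M p Y L H"
    by (simp add: expected_min_cond_risk_def)
  show "best_risk M p Y L H \<le> risk M p Y L h"
    unfolding best_risk_def using assms(1) by (rule INF_lower)
qed (use assms(2) expected_min_cond_risk_le_best_risk in auto)

lemma integral_le_expected_min_cond_risk:
  assumes "integrable M f" "\<forall>x\<in>space M. 0 \<le> f x"
    and "\<forall>x\<in>space M. \<forall>h\<in>H. f x \<le> cond_risk p Y L h x"
  shows "ereal (\<integral>x. f x \<partial>M) \<le> expected_min_cond_risk M p Y L H"
proof -
  have "(\<integral>\<^sup>+ x. ennreal (f x) \<partial>M) \<le> (\<integral>\<^sup>+ x. (INF h\<in>H. ennreal (cond_risk p Y L h x)) \<partial>M)"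
    using assms(3) by (intro nn_integral_mono INF_greatest ennreal_leI) auto
  then show ?thesis
    unfolding expected_min_cond_risk_def less_eq_ennreal.rep_eq
      enn2ereal_nn_integral_eq_integral[OF assms(1,2)] .
qed

lemma expected_min_cond_risk_le_integral:
  assumes "integrable M f" "\<forall>x\<in>space M. 0 \<le> f x"
    and "\<forall>x\<in>space M. \<exists>h\<in>H. cond_risk p Y L h x \<le> f x"
  shows "expected_min_cond_risk M p Y L H \<le> ereal (\<integral>x. f x \<partial>M)"
proof -
  have "(\<integral>\<^sup>+ x. (INF h\<in>H. ennreal (cond_risk p Y L h x)) \<partial>M) \<le> (\<integral>\<^sup>+ x. ennreal (f x) \<partial>M)"
  proof (intro nn_integral_mono)
    fix x assume "x \<in> space M"
    then obtain h where "h \<in> H" "cond_risk p Y L h x \<le> f x"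
      using assms(3) by blast
    then show "(INF h\<in>H. ennreal (cond_risk p Y L h x)) \<le> ennreal (f x)"
      by (intro INF_lower2[of h] ennreal_leI)
  qed
  then show ?thesis
    unfolding expected_min_cond_risk_def less_eq_ennreal.rep_eq
      enn2ereal_nn_integral_eq_integral[OF assms(1,2)] .
qed

lemma excess_risk_add_min_gap_le_integral:
  assumes "h \<in> H" "integrable M (cond_risk p Y L h)" "integrable M f"
    and f: "\<forall>x\<in>space M. 0 \<le> f x \<and> (\<forall>g\<in>H. f x \<le> cond_risk p Y L g x)"
  shows "risk M p Y L h - best_risk M p Y L H + min_gap M p Y L H
           \<le> ereal (\<integral>x. cond_risk p Y L h x - f x \<partial>M)"
proof -
  have nonneg: "\<forall>x\<in>space M. 0 \<le> cond_risk p Y L h x"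
    using f assms(1) by force
  then have risk: "risk M p Y L h = ereal (\<integral>x. cond_risk p Y L h x \<partial>M)"
    unfolding risk_eq_nn_integral_cond_risk by (intro enn2ereal_nn_integral_eq_integral assms(2))
  have "risk M p Y L h - best_risk M p Y L H + min_gap M p Y L H
      = risk M p Y L h - expected_min_cond_risk M p Y L H"
    using assms(1) risk by (intro excess_risk_add_min_gap) auto
  also have "\<dots> \<le> ereal (\<integral>x. cond_risk p Y L h x \<partial>M) - ereal (\<integral>x. f x \<partial>M)"
    unfolding risk using assms(3) f by (intro ereal_minus_mono integral_le_expected_min_cond_risk) auto
  also have "\<dots> = ereal (\<integral>x. cond_risk p Y L h x - f x \<partial>M)"
    using assms(2,3) by simp
  finally show ?thesis .
qed

lemma integral_le_excess_risk_add_min_gap: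
  assumes "h \<in> H" "integrable M (cond_risk p Y L h)" "integrable M f"
    and f: "\<forall>x\<in>space M. 0 \<le> f x \<and> f x \<le> cond_risk p Y L h x \<and> (\<exists>g\<in>H. cond_risk p Y L g x \<le> f x)"
  shows "ereal (\<integral>x. cond_risk p Y L h x - f x \<partial>M)
           \<le> risk M p Y L h - best_risk M p Y L H + min_gap M p Y L H"
proof -
  have nonneg: "\<forall>x\<in>space M. 0 \<le> cond_risk p Y L h x"
    using f by force
  then have risk: "risk M p Y L h = ereal (\<integral>x. cond_risk p Y L h x \<partial>M)"
    unfolding risk_eq_nn_integral_cond_risk by (intro enn2ereal_nn_integral_eq_integral assms(2))
  have "ereal (\<integral>x. cond_risk p Y L h x - f x \<partial>M)
      = ereal (\<integral>x. cond_risk p Y L h x \<partial>M) - ereal (\<integral>x. f x \<partial>M)"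
    using assms(2,3) by simp
  also have "\<dots> \<le> risk M p Y L h - expected_min_cond_risk M p Y L H"
    unfolding risk using assms(3) f by (intro ereal_minus_mono expected_min_cond_risk_le_integral) auto
  also have "\<dots> = risk M p Y L h - best_risk M p Y L H + min_gap M p Y L H"
    using assms(1) risk by (intro excess_risk_add_min_gap[symmetric]) auto
  finally show ?thesis .
qed

lemma excess_risk_min_gap_sqrt_transfer:
  fixes lo up :: "'x \<Rightarrow> real"
  assumes "prob_space M" "h \<in> H"
    and "integrable M (cond_risk p Y L1 h)" "cond_risk p Y L2 h \<in> borel_measurable M"
    and "lo \<in> borel_measurable M" "up \<in> borel_measurable M"
    and lo: "\<forall>x\<in>space M. 0 \<le> lo x \<and> (\<forall>g\<in>H. lo x \<le> cond_risk p Y L1 g x)"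
    and up: "\<forall>x\<in>space M. 0 \<le> up x \<and> up x \<le> cond_risk p Y L2 h x
               \<and> (\<exists>g\<in>H. cond_risk p Y L2 g x \<le> up x)"
    and calibration: "\<forall>x\<in>space M. \<forall>t>0.
           cond_risk p Y L1 h x - lo x \<le> (cond_risk p Y L2 h x - up x) / t + t"
  shows "risk M p Y L1 h - best_risk M p Y L1 H + min_gap M p Y L1 H
           \<le> 2 * esqrt (risk M p Y L2 h - best_risk M p Y L2 H + min_gap M p Y L2 H)"
proof (cases "risk M p Y L2 h = \<infinity>")
  case True
  then show ?thesis
    by (simp add: esqrt_def)
next
  case False
  interpret prob_space M
    by (rule assms(1))
  have "norm (lo x) \<le> norm (cond_risk p Y L1 h x)" if "x \<in> space M" for x
  proof -
    have "0 \<le> lo x" "lo x \<le> cond_risk p Y L1 h x"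
      using lo assms(2) that by auto
    then show ?thesis
      by simp
  qed
  then have "integrable M lo"
    by (intro Bochner_Integration.integrable_bound[OF assms(3,5)] AE_I2) auto
  have "integrable M (cond_risk p Y L2 h)"
  proof (rule integrableI_nonneg)
    show "(\<integral>\<^sup>+ x. ennreal (cond_risk p Y L2 h x) \<partial>M) < \<infinity>"
      using False by (simp add: risk_eq_nn_integral_cond_risk top.not_eq_extremum)
  qed (use assms(4) up in \<open>auto intro: order_trans\<close>)
  moreover have "integrable M up"
    using up by (intro Bochner_Integration.integrable_bound[OF calculation assms(6)] AE_I2) auto
  ultimately have gap: "ereal (\<integral>x. cond_risk p Y L2 h x - up x \<partial>M)
      \<le> risk M p Y L2 h - best_risk M p Y L2 H + min_gap M p Y L2 H"
    and sqrt_bound: "(\<integral>x. cond_risk p Y L1 h x - lo x \<partial>M)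
      \<le> 2 * sqrt (\<integral>x. cond_risk p Y L2 h x - up x \<partial>M)"
    using assms(2,3) \<open>integrable M lo\<close> up calibration
    by (intro integral_le_excess_risk_add_min_gap integral_le_two_sqrt
        Bochner_Integration.integrable_diff; force)+
  have "0 \<le> (\<integral>x. cond_risk p Y L2 h x - up x \<partial>M)"
    using up by (intro integral_nonneg_AE AE_I2) auto
  have "risk M p Y L1 h - best_risk M p Y L1 H + min_gap M p Y L1 H
      \<le> ereal (\<integral>x. cond_risk p Y L1 h x - lo x \<partial>M)"
    using assms(2,3) \<open>integrable M lo\<close> lo by (rule excess_risk_add_min_gap_le_integral)
  also have "\<dots> \<le> 2 * ereal (sqrt (\<integral>x. cond_risk p Y L2 h x - up x \<partial>M))"
    using sqrt_bound by simp
  also have "\<dots> \<le> 2 * esqrt (risk M p Y L2 h - best_risk M p Y L2 H + min_gap M p Y L2 H)"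
    using gap \<open>0 \<le> _\<close> by (intro ereal_mult_left_mono ereal_sqrt_le_esqrt) auto
  finally show ?thesis .
qed

section \<open>The multi-label setting\<close>

lemma borel_measurable_sgn01 [measurable]:
  "f \<in> borel_measurable M \<Longrightarrow> (\<lambda>x. sgn01 (f x)) \<in> borel_measurable M"
  unfolding sgn01_def by measurable

lemma borel_measurable_ln_two_cosh [measurable]:
  assumes [measurable]: "f \<in> borel_measurable M"
  shows "(\<lambda>x. ln_two_cosh (f x)) \<in> borel_measurable M"
proof -
  have [measurable]: "(\<lambda>x. - f x) \<in> borel_measurable M"
    by simp
  show ?thesis
    unfolding ln_two_cosh_def by measurable
qed

lemma hyp_class_realizes:
  assumes "complete_fam X F" "x \<in> X"
  shows "\<exists>g\<in>hyp_class l F. g x = v"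
proof -
  have "\<forall>i. \<exists>f\<in>F. f x = v i"
    using assms unfolding complete_fam_def by (metis UNIV_I imageE)
  then obtain f where "\<forall>i. f i \<in> F \<and> f i x = v i"
    by metis
  then show ?thesis
    by (intro bexI[of _ "\<lambda>x' i. f i x'"]) (auto simp: hyp_class_def)
qed

locale multilabel_distribution =
  fixes l :: nat and F :: "('x \<Rightarrow> real) set" and M :: "'x measure"
    and p :: "'x \<Rightarrow> (nat \<Rightarrow> real) \<Rightarrow> real"
  assumes l_pos: "l \<ge> 1"
    and complete: "complete_fam (space M) F"
    and F_measurable: "F \<subseteq> borel_measurable M"
    and prob: "prob_space M"
    and p_measurable: "\<forall>y\<in>labels l. (\<lambda>x. p x y) \<in> borel_measurable M"
    and p_nonneg: "\<forall>x\<in>space M. \<forall>y\<in>labels l. p x y \<ge> 0"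
    and p_sum: "\<forall>x\<in>space M. (\<Sum>y\<in>labels l. p x y) = 1"
begin

abbreviation mean :: "'x \<Rightarrow> nat \<Rightarrow> real" where
  "mean x \<equiv> label_mean l (p x)"

lemma abs_mean_le: "x \<in> space M \<Longrightarrow> \<forall>i\<in>{1..l}. \<bar>mean x i\<bar> \<le> 1"
  using p_nonneg p_sum by (simp add: abs_label_mean_le)

lemma cond_risk_ham_loss_eq:
  "x \<in> space M \<Longrightarrow> cond_risk p (labels l) (ham_loss l) g x = ham_cond_risk l (mean x) (g x)"
  using p_sum by (simp add: cond_risk_ham_loss)

lemma cond_risk_log_loss_eq:
  "x \<in> space M \<Longrightarrow> cond_risk p (labels l) (log_loss l) g x = log_cond_risk l (mean x) (g x)"
  using p_sum l_pos by (simp add: cond_risk_log_loss)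

lemma borel_measurable_mean: "(\<lambda>x. mean x i) \<in> borel_measurable M"
  unfolding label_mean_def using p_measurable by (intro borel_measurable_sum) auto

lemma borel_measurable_hyp:
  assumes "g \<in> hyp_class l F" "i \<in> {1..l}"
  shows "(\<lambda>x. g x i) \<in> borel_measurable M"
  using assms F_measurable unfolding hyp_class_def by auto

context
  fixes h assumes h: "h \<in> hyp_class l F"
begin

lemma borel_measurable_cond_risks:
  shows "cond_risk p (labels l) (ham_loss l) h \<in> borel_measurable M"
    and "cond_risk p (labels l) (log_loss l) h \<in> borel_measurable M"
    and "(\<lambda>x. ham_min_cond_risk l (mean x)) \<in> borel_measurable M"
    and "(\<lambda>x. log_cond_risk l (mean x) (sign_corrected l (mean x) (h x))) \<in> borel_measurable M"
proof -
  have [measurable]: "(\<lambda>x. h x i) \<in> borel_measurable M" if "i \<in> {1..l}" for i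
    using borel_measurable_hyp[OF h that] .
  note borel_measurable_mean [measurable]
  show "(\<lambda>x. ham_min_cond_risk l (mean x)) \<in> borel_measurable M"
    unfolding ham_min_cond_risk_def by measurable
  show "(\<lambda>x. log_cond_risk l (mean x) (sign_corrected l (mean x) (h x))) \<in> borel_measurable M"
    unfolding log_cond_risk_def coord_log_risk_def sign_corrected_def by measurable
  have "(\<lambda>x. ham_cond_risk l (mean x) (h x)) \<in> borel_measurable M"
    unfolding ham_cond_risk_def by measurable
  then show "cond_risk p (labels l) (ham_loss l) h \<in> borel_measurable M"
    by (subst measurable_cong[OF cond_risk_ham_loss_eq])
  have "(\<lambda>x. log_cond_risk l (mean x) (h x)) \<in> borel_measurable M"
    unfolding log_cond_risk_def coord_log_risk_def by measurable
  then show "cond_risk p (labels l) (log_loss l) h \<in> borel_measurable M"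
    by (subst measurable_cong[OF cond_risk_log_loss_eq])
qed

lemma cond_risk_ham_loss_bounds:
  assumes "x \<in> space M"
  shows "0 \<le> ham_min_cond_risk l (mean x)"
    and "ham_min_cond_risk l (mean x) \<le> cond_risk p (labels l) (ham_loss l) g x"
    and "cond_risk p (labels l) (ham_loss l) g x \<le> 1"
  using abs_mean_le[OF assms]
  by (simp_all add: cond_risk_ham_loss_eq[OF assms] ham_min_cond_risk_nonneg ham_min_cond_risk_le
      ham_cond_risk_le_one)

lemma cond_risk_log_loss_bounds:
  assumes "x \<in> space M"
  shows "0 \<le> log_cond_risk l (mean x) (sign_corrected l (mean x) (h x))"
    and "log_cond_risk l (mean x) (sign_corrected l (mean x) (h x))
           \<le> cond_risk p (labels l) (log_loss l) h x"
    and "\<exists>g\<in>hyp_class l F. cond_risk p (labels l) (log_loss l) g x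
           \<le> log_cond_risk l (mean x) (sign_corrected l (mean x) (h x))"
proof -
  show "0 \<le> log_cond_risk l (mean x) (sign_corrected l (mean x) (h x))"
    using l_pos abs_mean_le[OF assms] by (rule log_cond_risk_nonneg)
  show "log_cond_risk l (mean x) (sign_corrected l (mean x) (h x))
          \<le> cond_risk p (labels l) (log_loss l) h x"
    using l_pos by (simp add: cond_risk_log_loss_eq[OF assms] log_cond_risk_sign_corrected_le)
  obtain g where "g \<in> hyp_class l F" "g x = sign_corrected l (mean x) (h x)"
    using hyp_class_realizes[OF complete assms] by blast
  then show "\<exists>g\<in>hyp_class l F. cond_risk p (labels l) (log_loss l) g x
               \<le> log_cond_risk l (mean x) (sign_corrected l (mean x) (h x))"
    by (intro bexI[of _ g]) (simp_all add: cond_risk_log_loss_eq[OF assms])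
qed

theorem ham_excess_le_sqrt_log_excess:
  "risk M p (labels l) (ham_loss l) h - best_risk M p (labels l) (ham_loss l) (hyp_class l F)
     + min_gap M p (labels l) (ham_loss l) (hyp_class l F)
   \<le> 2 * esqrt (risk M p (labels l) (log_loss l) h
                 - best_risk M p (labels l) (log_loss l) (hyp_class l F)
                 + min_gap M p (labels l) (log_loss l) (hyp_class l F))"
proof (rule excess_risk_min_gap_sqrt_transfer[OF prob h _ borel_measurable_cond_risks(2-4)])
  interpret prob_space M
    by (rule prob)
  have "\<bar>cond_risk p (labels l) (ham_loss l) h x\<bar> \<le> 1" if "x \<in> space M" for x
    using cond_risk_ham_loss_bounds(1)[OF that] cond_risk_ham_loss_bounds(2,3)[OF that, of h]
    by (simp add: abs_le_iff)
  then show "integrable M (cond_risk p (labels l) (ham_loss l) h)"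
    by (intro integrable_const_bound[where B = 1] AE_I2 borel_measurable_cond_risks(1)) auto
qed (use cond_risk_ham_loss_bounds cond_risk_log_loss_bounds l_pos in
      \<open>auto simp: cond_risk_ham_loss_eq cond_risk_log_loss_eq ham_log_calibration\<close>)

end

end

theorem theorem2:
  fixes l :: nat and F :: "('x \<Rightarrow> real) set" and M :: "'x measure"
    and p :: "'x \<Rightarrow> (nat \<Rightarrow> real) \<Rightarrow> real" and h :: "'x \<Rightarrow> nat \<Rightarrow> real"
  assumes "l \<ge> 1"
    and "complete_fam (space M) F"
    and "F \<subseteq> borel_measurable M"
    and "prob_space M"
    and "\<forall>y\<in>labels l. (\<lambda>x. p x y) \<in> borel_measurable M"
    and "\<forall>x\<in>space M. \<forall>y\<in>labels l. p x y \<ge> 0"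
    and "\<forall>x\<in>space M. (\<Sum>y\<in>labels l. p x y) = 1"
    and "h \<in> hyp_class l F"
  shows "risk M p (labels l) (ham_loss l) h - best_risk M p (labels l) (ham_loss l) (hyp_class l F)
           + min_gap M p (labels l) (ham_loss l) (hyp_class l F)
         \<le> 2 * esqrt (risk M p (labels l) (log_loss l) h
                       - best_risk M p (labels l) (log_loss l) (hyp_class l F)
                       + min_gap M p (labels l) (log_loss l) (hyp_class l F))"
proof -
  interpret multilabel_distribution l F M p
    using assms(1-7) by (rule multilabel_distribution.intro)
  show ?thesis
    using assms(8) by (rule ham_excess_le_sqrt_log_excess)
qed

end
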